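(* Assume Assumption 1 (randomization) and $0<P(Z=1\mid R=r)<1$, without assuming monotonicity. If $P_{01r}>P_{10r}$, then $\pi_{ss,r}>0$ and $$\max\Big\{0,1-\frac{(1-Q_{11r})P_{11r}}{P_{01r}-P_{10r}}\Big\}-\min\Big\{1,\frac{Q_{01r}P_{01r}}{P_{01r}-P_{10r}}\Big\}\ \le\ ACE_{ss,r}\ \le\ \min\Big\{1,\frac{Q_{11r}P_{11r}}{P_{01r}-P_{10r}}\Big\}+\min\Big\{0,\frac{(1-Q_{01r})P_{01r}}{P_{01r}-P_{10r}}-1\Big\}.$$
   Context: A unit has trial $R$, treatment $Z\in\{0,1\}$, binary potential surrogate and endpoint $S(z),Y(z)$; observed $S=ZS(1)+(1-Z)S(0)$, $Y=ZY(1)+(1-Z)Y(0)$. $U=(S(1),S(0))$ with $ss=(1,1)$, $s\bar{s}=(1,0)$, $\bar{s}s=(0,1)$, $\bar{s}\bar{s}=(0,0)$; $\pi_{ur}=P(U=u\mid R=r)$; $ACE_{ur}=E\{Y(1)-Y(0)\mid U=u,R=r\}$. $P_{zsr}=P(S=s\mid Z=z,R=r)$ and $Q_{zsr}=P(Y=1\mid Z=z,S=s,R=r)$. Assumption 1 (randomization): $Z\perp\!\!\!\perp\{S(1),S(0),Y(1),Y(0)\}\mid R$. *)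

theory Defs
  imports "HOL-Probability.Probability"
begin

text \<open>A unit: trial R, treatment Z, potential surrogates S(1), S(0),
  potential endpoints Y(1), Y(0) (binary values encoded as bool).\<close>
record 'r unit_data =
  trial :: 'r
  trt :: bool
  s1 :: bool
  s0 :: bool
  y1 :: bool
  y0 :: bool

definition obsS :: "('r, 'x) unit_data_scheme \<Rightarrow> bool" where
  "obsS \<omega> = (if trt \<omega> then s1 \<omega> else s0 \<omega>)"

definition obsY :: "('r, 'x) unit_data_scheme \<Rightarrow> bool" where
  "obsY \<omega> = (if trt \<omega> then y1 \<omega> else y0 \<omega>)"

definition bv :: "bool \<Rightarrow> real" where "bv b = (if b then 1 else 0)"

definition Pr :: "'a pmf \<Rightarrow> ('a \<Rightarrow> bool) \<Rightarrow> real" where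
  "Pr p A = measure_pmf.prob p {\<omega>. A \<omega>}"

text \<open>Conditional probability P(A | B) (0 if P(B)=0).\<close>
definition cPr :: "'a pmf \<Rightarrow> ('a \<Rightarrow> bool) \<Rightarrow> ('a \<Rightarrow> bool) \<Rightarrow> real" where
  "cPr p A B = Pr p (\<lambda>\<omega>. A \<omega> \<and> B \<omega>) / Pr p B"

text \<open>Conditional expectation E(f | B) (0 if P(B)=0).\<close>
definition cE :: "'a pmf \<Rightarrow> ('a \<Rightarrow> real) \<Rightarrow> ('a \<Rightarrow> bool) \<Rightarrow> real" where
  "cE p f B = measure_pmf.expectation p (\<lambda>\<omega>. (if B \<omega> then f \<omega> else 0)) / Pr p B"

text \<open>Assumption 1: Z independent of (S(1),S(0),Y(1),Y(0)) given R.\<close>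
definition randomization :: "'r unit_data pmf \<Rightarrow> bool" where
  "randomization p \<longleftrightarrow>
     (\<forall>r z a b c d.
        Pr p (\<lambda>\<omega>. trial \<omega> = r \<and> trt \<omega> = z \<and> s1 \<omega> = a \<and> s0 \<omega> = b \<and> y1 \<omega> = c \<and> y0 \<omega> = d)
          * Pr p (\<lambda>\<omega>. trial \<omega> = r)
        = Pr p (\<lambda>\<omega>. trial \<omega> = r \<and> trt \<omega> = z)
          * Pr p (\<lambda>\<omega>. trial \<omega> = r \<and> s1 \<omega> = a \<and> s0 \<omega> = b \<and> y1 \<omega> = c \<and> y0 \<omega> = d))"

definition Pzsr :: "'r unit_data pmf \<Rightarrow> bool \<Rightarrow> bool \<Rightarrow> 'r \<Rightarrow> real" where
  "Pzsr p z s r = cPr p (\<lambda>\<omega>. obsS \<omega> = s) (\<lambda>\<omega>. trt \<omega> = z \<and> trial \<omega> = r)"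

definition Qzsr :: "'r unit_data pmf \<Rightarrow> bool \<Rightarrow> bool \<Rightarrow> 'r \<Rightarrow> real" where
  "Qzsr p z s r = cPr p (\<lambda>\<omega>. obsY \<omega>) (\<lambda>\<omega>. trt \<omega> = z \<and> obsS \<omega> = s \<and> trial \<omega> = r)"

definition pi_ur :: "'r unit_data pmf \<Rightarrow> bool \<times> bool \<Rightarrow> 'r \<Rightarrow> real" where
  "pi_ur p u r = cPr p (\<lambda>\<omega>. (s1 \<omega>, s0 \<omega>) = u) (\<lambda>\<omega>. trial \<omega> = r)"

definition ACE_ur :: "'r unit_data pmf \<Rightarrow> bool \<times> bool \<Rightarrow> 'r \<Rightarrow> real" where
  "ACE_ur p u r = cE p (\<lambda>\<omega>. bv (y1 \<omega>) - bv (y0 \<omega>))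
                      (\<lambda>\<omega>. (s1 \<omega>, s0 \<omega>) = u \<and> trial \<omega> = r)"

end

theory Submission
  imports Defs
begin

text \<open>Randomization turns each observed quantity into one about the potential outcomes given
  R = r: P11r = P(S(1)), P01r = P(S(0)), P10r = P(not S(1)) and Qz1r Pz1r = P(Y(z), S(z)).
  Without monotonicity, P01r - P10r = pi_ss - pi_(not s, not s) is merely a lower bound d for
  pi_ss, which is therefore positive.  With e_z = P(Y(z) | U = ss), so that ACE_ss = e_1 - e_0,
  the stratum ss lies inside the event S(z); hence pi_ss e_z <= Qz1r Pz1r and
  pi_ss (1 - e_z) <= (1 - Qz1r) Pz1r.  Dividing by d instead of pi_ss and using 0 <= e_z <= 1
  gives the bounds.\<close>

lemma Pr_nonneg: "0 \<le> Pr p A"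
  unfolding Pr_def by simp

lemma Pr_mono: "(\<And>\<omega>. A \<omega> \<Longrightarrow> B \<omega>) \<Longrightarrow> Pr p A \<le> Pr p B"
  unfolding Pr_def by (rule measure_pmf.finite_measure_mono) auto

lemma Pr_add: "Pr p A = Pr p (\<lambda>\<omega>. A \<omega> \<and> B \<omega>) + Pr p (\<lambda>\<omega>. A \<omega> \<and> \<not> B \<omega>)"
proof -
  have "{\<omega>. A \<omega>} = {\<omega>. A \<omega> \<and> B \<omega>} \<union> {\<omega>. A \<omega> \<and> \<not> B \<omega>}" by auto
  then show ?thesis
    unfolding Pr_def by (simp add: measure_pmf.finite_measure_Union disjoint_iff)
qed

lemma Pr_sum_values:
  fixes f :: "'a \<Rightarrow> 'b::finite"
  shows "Pr p (\<lambda>\<omega>. B \<omega> \<and> A (f \<omega>)) = (\<Sum>x | A x. Pr p (\<lambda>\<omega>. B \<omega> \<and> f \<omega> = x))"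
proof -
  have "{\<omega>. B \<omega> \<and> A (f \<omega>)} = (\<Union>x\<in>{x. A x}. {\<omega>. B \<omega> \<and> f \<omega> = x})" by auto
  moreover have "measure_pmf.prob p (\<Union>x\<in>{x. A x}. {\<omega>. B \<omega> \<and> f \<omega> = x})
      = (\<Sum>x | A x. measure_pmf.prob p {\<omega>. B \<omega> \<and> f \<omega> = x})"
    by (rule measure_pmf.finite_measure_finite_Union) (auto simp: disjoint_family_on_def)
  ultimately show ?thesis unfolding Pr_def by simp
qed

lemma cPr_nonneg: "0 \<le> cPr p A B"
  unfolding cPr_def by (simp add: Pr_nonneg)

lemma cPr_le_1: "cPr p A B \<le> 1"
  using Pr_mono[of "\<lambda>\<omega>. A \<omega> \<and> B \<omega>" B p] Pr_nonneg[of p B]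
  unfolding cPr_def by (auto simp: divide_le_eq_1)

lemma cPr_mono: "(\<And>\<omega>. B \<omega> \<Longrightarrow> A \<omega> \<Longrightarrow> A' \<omega>) \<Longrightarrow> cPr p A B \<le> cPr p A' B"
  unfolding cPr_def by (intro divide_right_mono Pr_mono) (auto simp: Pr_nonneg)

lemma cPr_cong: "(\<And>\<omega>. B \<omega> \<Longrightarrow> A \<omega> \<longleftrightarrow> A' \<omega>) \<Longrightarrow> cPr p A B = cPr p A' B"
  unfolding cPr_def by (metis (mono_tags, lifting))

lemma cPr_add: "cPr p A C = cPr p (\<lambda>\<omega>. A \<omega> \<and> B \<omega>) C + cPr p (\<lambda>\<omega>. A \<omega> \<and> \<not> B \<omega>) C"
  unfolding cPr_def Pr_add[of p "\<lambda>\<omega>. A \<omega> \<and> C \<omega>" B]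
  by (simp add: add_divide_distrib conj_ac)

lemma cPr_chain:
  assumes "\<And>\<omega>. D \<omega> \<longleftrightarrow> B \<omega> \<and> C \<omega>"
  shows "cPr p A D * cPr p B C = cPr p (\<lambda>\<omega>. A \<omega> \<and> B \<omega>) C"
proof (cases "Pr p D = 0")
  case True
  have "Pr p (\<lambda>\<omega>. (A \<omega> \<and> B \<omega>) \<and> C \<omega>) \<le> Pr p D"
    using assms by (intro Pr_mono) auto
  with True have "Pr p (\<lambda>\<omega>. (A \<omega> \<and> B \<omega>) \<and> C \<omega>) = 0"
    using Pr_nonneg[of p] by (simp add: order_antisym)
  then show ?thesis using True unfolding cPr_def by simp
next
  case False
  have "(\<lambda>\<omega>. B \<omega> \<and> C \<omega>) = D" "(\<lambda>\<omega>. A \<omega> \<and> D \<omega>) = (\<lambda>\<omega>. (A \<omega> \<and> B \<omega>) \<and> C \<omega>)"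
    using assms by auto
  with False show ?thesis unfolding cPr_def by simp
qed

lemma cPr_compl: "0 < Pr p B \<Longrightarrow> cPr p (\<lambda>\<omega>. \<not> A \<omega>) B = 1 - cPr p A B"
  using Pr_add[of p B A] unfolding cPr_def by (simp add: field_simps conj_commute)

lemma cPr_pos_imp_Pr_pos: "0 < cPr p A B \<Longrightarrow> 0 < Pr p (\<lambda>\<omega>. A \<omega> \<and> B \<omega>)"
  unfolding cPr_def using Pr_nonneg[of p] by (metis divide_eq_0_iff order_less_le)

lemma cPr_less_1_imp_Pr_pos:
  assumes "cPr p A B < 1" and "0 < Pr p B"
  shows "0 < Pr p (\<lambda>\<omega>. \<not> A \<omega> \<and> B \<omega>)"
proof (rule ccontr)
  assume "\<not> 0 < Pr p (\<lambda>\<omega>. \<not> A \<omega> \<and> B \<omega>)"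
  then have "Pr p (\<lambda>\<omega>. \<not> A \<omega> \<and> B \<omega>) = 0"
    using Pr_nonneg[of p "\<lambda>\<omega>. \<not> A \<omega> \<and> B \<omega>"] by linarith
  moreover have "Pr p B = Pr p (\<lambda>\<omega>. A \<omega> \<and> B \<omega>) + Pr p (\<lambda>\<omega>. \<not> A \<omega> \<and> B \<omega>)"
    using Pr_add[of p B A] by (simp add: conj_commute)
  ultimately have "cPr p A B = 1"
    using assms(2) unfolding cPr_def by simp
  with assms(1) show False by simp
qed

lemma Pr_pos_of_cPr_strictly_between:
  assumes "0 < cPr p A B" and "cPr p A B < 1"
  shows "0 < Pr p (\<lambda>\<omega>. A \<omega> = z \<and> B \<omega>)"
proof -
  have pos: "0 < Pr p (\<lambda>\<omega>. A \<omega> \<and> B \<omega>)"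
    using cPr_pos_imp_Pr_pos[OF assms(1)] .
  then have "0 < Pr p B"
    using Pr_mono[of "\<lambda>\<omega>. A \<omega> \<and> B \<omega>" B p] by simp
  with pos show ?thesis
    using cPr_less_1_imp_Pr_pos[OF assms(2)] by (cases z) simp_all
qed

lemma cE_bv_diff: "cE p (\<lambda>\<omega>. bv (X \<omega>) - bv (Y \<omega>)) B = cPr p X B - cPr p Y B"
proof -
  have eq: "(\<lambda>\<omega>. if B \<omega> then bv (X \<omega>) - bv (Y \<omega>) else 0)
      = (\<lambda>\<omega>. indicator {\<omega>. X \<omega> \<and> B \<omega>} \<omega> - indicator {\<omega>. Y \<omega> \<and> B \<omega>} \<omega>)"
    by (auto simp: bv_def indicator_def)
  have "integrable (measure_pmf p) (indicator {\<omega>. X \<omega> \<and> B \<omega>} :: _ \<Rightarrow> real)"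
    "integrable (measure_pmf p) (indicator {\<omega>. Y \<omega> \<and> B \<omega>} :: _ \<Rightarrow> real)"
    by (simp_all add: measure_pmf.emeasure_finite less_top[symmetric])
  then show ?thesis
    unfolding cE_def cPr_def Pr_def eq by (simp add: diff_divide_distrib)
qed

definition potential_outcomes :: "('r, 'x) unit_data_scheme \<Rightarrow> bool \<times> bool \<times> bool \<times> bool" where
  "potential_outcomes \<omega> = (s1 \<omega>, s0 \<omega>, y1 \<omega>, y0 \<omega>)"

lemma randomization_event:
  assumes "randomization p"
  shows "Pr p (\<lambda>\<omega>. (trt \<omega> = z \<and> trial \<omega> = r) \<and> A (potential_outcomes \<omega>))
         * Pr p (\<lambda>\<omega>. trial \<omega> = r)
       = Pr p (\<lambda>\<omega>. trt \<omega> = z \<and> trial \<omega> = r) * Pr p (\<lambda>\<omega>. trial \<omega> = r \<and> A (potential_outcomes \<omega>))"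
proof -
  have single: "Pr p (\<lambda>\<omega>. (trt \<omega> = z \<and> trial \<omega> = r) \<and> potential_outcomes \<omega> = x)
        * Pr p (\<lambda>\<omega>. trial \<omega> = r)
      = Pr p (\<lambda>\<omega>. trt \<omega> = z \<and> trial \<omega> = r) * Pr p (\<lambda>\<omega>. trial \<omega> = r \<and> potential_outcomes \<omega> = x)" for x
    using assms unfolding randomization_def potential_outcomes_def
    by (cases x) (simp add: conj_ac)
  show ?thesis
    unfolding Pr_sum_values[of p "\<lambda>\<omega>. trt \<omega> = z \<and> trial \<omega> = r" A potential_outcomes]
      Pr_sum_values[of p "\<lambda>\<omega>. trial \<omega> = r" A potential_outcomes] sum_distrib_left sum_distrib_right
    using single by simp
qed

lemma cPr_potential_randomized:
  assumes "randomization p" and "0 < Pr p (\<lambda>\<omega>. trt \<omega> = z \<and> trial \<omega> = r)"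
  shows "cPr p (\<lambda>\<omega>. A (potential_outcomes \<omega>)) (\<lambda>\<omega>. trt \<omega> = z \<and> trial \<omega> = r)
       = cPr p (\<lambda>\<omega>. A (potential_outcomes \<omega>)) (\<lambda>\<omega>. trial \<omega> = r)"
proof -
  have "Pr p (\<lambda>\<omega>. trt \<omega> = z \<and> trial \<omega> = r) \<le> Pr p (\<lambda>\<omega>. trial \<omega> = r)"
    by (rule Pr_mono) simp
  then have "0 < Pr p (\<lambda>\<omega>. trial \<omega> = r)" using assms(2) by linarith
  with assms(2) randomization_event[OF assms(1), of z r A] show ?thesis
    unfolding cPr_def by (simp add: field_simps conj_ac)
qed

definition potential_S :: "bool \<Rightarrow> ('r, 'x) unit_data_scheme \<Rightarrow> bool" where
  "potential_S z \<omega> = (if z then s1 \<omega> else s0 \<omega>)"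

definition potential_Y :: "bool \<Rightarrow> ('r, 'x) unit_data_scheme \<Rightarrow> bool" where
  "potential_Y z \<omega> = (if z then y1 \<omega> else y0 \<omega>)"

lemma Pzsr_randomized:
  assumes "randomization p" and "0 < Pr p (\<lambda>\<omega>. trt \<omega> = z \<and> trial \<omega> = r)"
  shows "Pzsr p z s r = cPr p (\<lambda>\<omega>. potential_S z \<omega> = s) (\<lambda>\<omega>. trial \<omega> = r)"
proof -
  have "Pzsr p z s r = cPr p (\<lambda>\<omega>. potential_S z \<omega> = s) (\<lambda>\<omega>. trt \<omega> = z \<and> trial \<omega> = r)"
    unfolding Pzsr_def by (rule cPr_cong) (auto simp: obsS_def potential_S_def)
  also have "\<dots> = cPr p (\<lambda>\<omega>. potential_S z \<omega> = s) (\<lambda>\<omega>. trial \<omega> = r)"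
    using cPr_potential_randomized[OF assms, of "\<lambda>(a, b, _). (if z then a else b) = s"]
    by (simp add: potential_outcomes_def potential_S_def)
  finally show ?thesis .
qed

lemma Qzsr_Pzsr_randomized:
  assumes "randomization p" and "0 < Pr p (\<lambda>\<omega>. trt \<omega> = z \<and> trial \<omega> = r)"
  shows "Qzsr p z s r * Pzsr p z s r
       = cPr p (\<lambda>\<omega>. potential_Y z \<omega> \<and> potential_S z \<omega> = s) (\<lambda>\<omega>. trial \<omega> = r)"
proof -
  have "Qzsr p z s r * Pzsr p z s r
      = cPr p (\<lambda>\<omega>. obsY \<omega> \<and> obsS \<omega> = s) (\<lambda>\<omega>. trt \<omega> = z \<and> trial \<omega> = r)"
    unfolding Qzsr_def Pzsr_def by (rule cPr_chain) auto
  also have "\<dots> = cPr p (\<lambda>\<omega>. potential_Y z \<omega> \<and> potential_S z \<omega> = s)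
                      (\<lambda>\<omega>. trt \<omega> = z \<and> trial \<omega> = r)"
    by (rule cPr_cong) (auto simp: obsS_def obsY_def potential_S_def potential_Y_def)
  also have "\<dots> = cPr p (\<lambda>\<omega>. potential_Y z \<omega> \<and> potential_S z \<omega> = s) (\<lambda>\<omega>. trial \<omega> = r)"
    using cPr_potential_randomized[OF assms,
        of "\<lambda>(a, b, c, d). (if z then c else d) \<and> (if z then a else b) = s"]
    by (simp add: potential_outcomes_def potential_S_def potential_Y_def)
  finally show ?thesis .
qed

lemma one_minus_Qzsr_Pzsr_randomized:
  assumes "randomization p" and "0 < Pr p (\<lambda>\<omega>. trt \<omega> = z \<and> trial \<omega> = r)"
  shows "(1 - Qzsr p z s r) * Pzsr p z s r
       = cPr p (\<lambda>\<omega>. \<not> potential_Y z \<omega> \<and> potential_S z \<omega> = s) (\<lambda>\<omega>. trial \<omega> = r)"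
  using Pzsr_randomized[OF assms, of s] Qzsr_Pzsr_randomized[OF assms, of s]
    cPr_add[of p "\<lambda>\<omega>. potential_S z \<omega> = s" "\<lambda>\<omega>. trial \<omega> = r" "potential_Y z"]
  by (simp add: algebra_simps conj_commute)

lemma ACE_ur_eq_diff: "ACE_ur p u r
    = cPr p (potential_Y True) (\<lambda>\<omega>. (s1 \<omega>, s0 \<omega>) = u \<and> trial \<omega> = r)
    - cPr p (potential_Y False) (\<lambda>\<omega>. (s1 \<omega>, s0 \<omega>) = u \<and> trial \<omega> = r)"
  unfolding ACE_ur_def cE_bv_diff by (simp add: potential_Y_def[abs_def])

lemma cPr_stratum_mult_pi_ur: "cPr p Y (\<lambda>\<omega>. (s1 \<omega>, s0 \<omega>) = u \<and> trial \<omega> = r) * pi_ur p u r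
    = cPr p (\<lambda>\<omega>. Y \<omega> \<and> (s1 \<omega>, s0 \<omega>) = u) (\<lambda>\<omega>. trial \<omega> = r)"
  unfolding pi_ur_def by (rule cPr_chain) simp

lemma pi_ur_ss_mult_cPr_le:
  "pi_ur p (True, True) r * cPr p Y (\<lambda>\<omega>. (s1 \<omega>, s0 \<omega>) = (True, True) \<and> trial \<omega> = r)
     \<le> cPr p (\<lambda>\<omega>. Y \<omega> \<and> potential_S z \<omega>) (\<lambda>\<omega>. trial \<omega> = r)"
  unfolding mult.commute[of "pi_ur p (True, True) r"] cPr_stratum_mult_pi_ur
  by (rule cPr_mono) (auto simp: potential_S_def)

lemma surrogate_gap_le_pi_ur:
  "cPr p s0 (\<lambda>\<omega>. trial \<omega> = r) - cPr p (\<lambda>\<omega>. \<not> s1 \<omega>) (\<lambda>\<omega>. trial \<omega> = r)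
     \<le> pi_ur p (True, True) r"
proof -
  let ?C = "\<lambda>\<omega>. trial \<omega> = r"
  have "cPr p s0 ?C = pi_ur p (True, True) r + cPr p (\<lambda>\<omega>. s0 \<omega> \<and> \<not> s1 \<omega>) ?C"
    using cPr_add[of p s0 ?C s1] unfolding pi_ur_def by (simp add: conj_commute)
  moreover have "cPr p (\<lambda>\<omega>. s0 \<omega> \<and> \<not> s1 \<omega>) ?C \<le> cPr p (\<lambda>\<omega>. \<not> s1 \<omega>) ?C"
    by (rule cPr_mono) simp
  ultimately show ?thesis by linarith
qed

lemma le_divide_of_mult_le:
  fixes d \<pi> e x :: real
  assumes "0 < d" "d \<le> \<pi>" "0 \<le> e" "\<pi> * e \<le> x"
  shows "e \<le> x / d"
proof -
  have "d * e \<le> \<pi> * e" using assms by (intro mult_right_mono) auto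
  with assms show ?thesis by (simp add: pos_le_divide_eq mult.commute)
qed

lemma difference_bounds:
  fixes d \<pi> e1 e0 x1 x0 w1 w0 :: real
  assumes "0 < d" "d \<le> \<pi>" "0 \<le> e1" "e1 \<le> 1" "0 \<le> e0" "e0 \<le> 1"
    and "\<pi> * e1 \<le> x1" "\<pi> * (1 - e1) \<le> w1" "\<pi> * e0 \<le> x0" "\<pi> * (1 - e0) \<le> w0"
  shows "max 0 (1 - w1 / d) - min 1 (x0 / d) \<le> e1 - e0
    \<and> e1 - e0 \<le> min 1 (x1 / d) + min 0 (w0 / d - 1)"
proof -
  have "e1 \<le> x1 / d" "1 - e1 \<le> w1 / d" "e0 \<le> x0 / d" "1 - e0 \<le> w0 / d"
    using le_divide_of_mult_le[OF assms(1,2)] assms(3-10) by simp_all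
  with assms(3-6) show ?thesis by linarith
qed

theorem propositionA1:
  fixes p :: "'r unit_data pmf" and r :: 'r
  assumes "randomization p"
    and "0 < cPr p (\<lambda>\<omega>. trt \<omega>) (\<lambda>\<omega>. trial \<omega> = r)"
    and "cPr p (\<lambda>\<omega>. trt \<omega>) (\<lambda>\<omega>. trial \<omega> = r) < 1"
    and "Pzsr p False True r > Pzsr p True False r"
  shows "pi_ur p (True, True) r > 0 \<and>
    max 0 (1 - (1 - Qzsr p True True r) * Pzsr p True True r
                 / (Pzsr p False True r - Pzsr p True False r))
    - min 1 (Qzsr p False True r * Pzsr p False True r
                 / (Pzsr p False True r - Pzsr p True False r))
      \<le> ACE_ur p (True, True) r \<and>
    ACE_ur p (True, True) r \<le>
      min 1 (Qzsr p True True r * Pzsr p True True r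
                 / (Pzsr p False True r - Pzsr p True False r))
    + min 0 ((1 - Qzsr p False True r) * Pzsr p False True r
                 / (Pzsr p False True r - Pzsr p True False r) - 1)"
proof -
  let ?ss = "\<lambda>\<omega>. (s1 \<omega>, s0 \<omega>) = (True, True) \<and> trial \<omega> = r"
  define \<pi> where "\<pi> = pi_ur p (True, True) r"
  define d where "d = Pzsr p False True r - Pzsr p True False r"
  have arms: "0 < Pr p (\<lambda>\<omega>. trt \<omega> = z \<and> trial \<omega> = r)" for z
    using Pr_pos_of_cPr_strictly_between[OF assms(2,3)] .
  note P = Pzsr_randomized[OF assms(1) arms]
  note QP = Qzsr_Pzsr_randomized[OF assms(1) arms]
  note QP' = one_minus_Qzsr_Pzsr_randomized[OF assms(1) arms]
  have "0 < d" using assms(4) by (simp add: d_def)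
  moreover have "d \<le> \<pi>"
    using surrogate_gap_le_pi_ur[of p r] unfolding d_def \<pi>_def P by (simp add: potential_S_def)
  ultimately have "0 < \<pi>" by linarith
  then have "0 < Pr p ?ss"
    unfolding \<pi>_def pi_ur_def by (rule cPr_pos_imp_Pr_pos)
  note complement = cPr_compl[OF this]
  have "\<pi> * cPr p (potential_Y z) ?ss \<le> Qzsr p z True r * Pzsr p z True r"
    "\<pi> * (1 - cPr p (potential_Y z) ?ss) \<le> (1 - Qzsr p z True r) * Pzsr p z True r" for z
    using pi_ur_ss_mult_cPr_le[of p r "potential_Y z" z]
      pi_ur_ss_mult_cPr_le[of p r "\<lambda>\<omega>. \<not> potential_Y z \<omega>" z]
    unfolding QP QP' complement \<pi>_def by simp_all
  with \<open>0 < d\<close> \<open>d \<le> \<pi>\<close> \<open>0 < \<pi>\<close> show ?thesis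
    unfolding ACE_ur_eq_diff d_def[symmetric] \<pi>_def[symmetric]
    by (intro conjI difference_bounds[THEN conjunct1] difference_bounds[THEN conjunct2])
      (simp_all add: cPr_nonneg cPr_le_1)
qed

end
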